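(* Let $1\le f\le\lfloor n/2\rfloor$ and $d\in\mathcal D_f$. Then $\ell(wd)\ge\ell(d)$ for every $w\in\Psi$.
   Context: $\mathfrak S_n$ acts on $\{1,\dots,n\}$ on the right: $(a)(\sigma\tau)=((a)\sigma)\tau$; $s_j=(j,j+1)$, $\ell$ is the Coxeter length (number of inversions). Let $\nu_f=((2^f),(n-2f))$ and $\mathfrak t^{\nu_f}$ the bitableau with $1,\dots,n$ entered in order along the rows of the first component (shape $(2^f)$) and then along the single row of the second component; $\mathfrak t^{\nu_f}d$ replaces each entry $a$ by $(a)d$. $\mathcal D_{\nu_f}$ is the set of $d\in\mathfrak S_n$ such that $\mathfrak t^{\nu_f}d$ is row standard and the first column of its first component increases from top to bottom; $\mathcal D_f=\mathcal D_{\nu_f}\cap\mathfrak S_{2f}$. $\mathfrak S_{(2^f)}$ is the subgroup generated by $s_1,s_3,\dots,s_{2f-1}$; $\Pi$ is the subgroup of $\mathfrak S_{2f}$ permuting the rows of the first component of $\mathfrak t^{\nu_f}$ while keeping the entries within rows in order (generated by $\tilde s_i=s_{2i}s_{2i-1}s_{2i+1}s_{2i}$, $1\le i\le f-1$); $\Psi=\mathfrak S_{(2^f)}\rtimes\Pi$. *)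

theory Defs
  imports "HOL-Combinatorics.Combinatorics"
begin

text \<open>The symmetric group acts on the RIGHT: (a)(sigma tau) = ((a)sigma)tau,
  so the product sigma tau is the function tau o sigma.\<close>

definition Sym :: "nat \<Rightarrow> (nat \<Rightarrow> nat) set" where
  "Sym n = {\<sigma>. \<sigma> permutes {1..n}}"

definition rmult :: "(nat \<Rightarrow> nat) \<Rightarrow> (nat \<Rightarrow> nat) \<Rightarrow> (nat \<Rightarrow> nat)" where
  "rmult \<sigma> \<tau> = \<tau> \<circ> \<sigma>"

definition sgen :: "nat \<Rightarrow> (nat \<Rightarrow> nat)" where
  "sgen j = transpose j (j + 1)"

text \<open>Coxeter length = number of inversions.\<close>
definition len :: "nat \<Rightarrow> (nat \<Rightarrow> nat) \<Rightarrow> nat" where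
  "len n \<sigma> = card {(i, j). 1 \<le> i \<and> i < j \<and> j \<le> n \<and> \<sigma> i > \<sigma> j}"

text \<open>D_{nu_f}: t^{nu_f} d row standard and first column of the first component increasing.
  Row i of the first component of t^{nu_f} is (2i-1, 2i); second component is 2f+1,...,n.\<close>
definition D_nu :: "nat \<Rightarrow> nat \<Rightarrow> (nat \<Rightarrow> nat) set" where
  "D_nu n f = {d \<in> Sym n.
      (\<forall>i\<in>{1..f}. d (2*i - 1) < d (2*i)) \<and>
      (\<forall>a. 2*f < a \<and> a < n \<longrightarrow> d a < d (a + 1)) \<and>
      (\<forall>i\<in>{1..<f}. d (2*i - 1) < d (2*i + 1))}"

definition D_f :: "nat \<Rightarrow> nat \<Rightarrow> (nat \<Rightarrow> nat) set" where
  "D_f n f = D_nu n f \<inter> Sym (2*f)"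

inductive_set gen_group :: "(nat \<Rightarrow> nat) set \<Rightarrow> (nat \<Rightarrow> nat) set" for S where
  gen_id: "id \<in> gen_group S"
| gen_gen: "s \<in> S \<Longrightarrow> s \<in> gen_group S"
| gen_mult: "g \<in> gen_group S \<Longrightarrow> h \<in> gen_group S \<Longrightarrow> rmult g h \<in> gen_group S"
| gen_inv: "g \<in> gen_group S \<Longrightarrow> inv g \<in> gen_group S"

definition stilde :: "nat \<Rightarrow> (nat \<Rightarrow> nat)" where
  "stilde i = rmult (rmult (rmult (sgen (2*i)) (sgen (2*i - 1))) (sgen (2*i + 1))) (sgen (2*i))"

definition Psi :: "nat \<Rightarrow> (nat \<Rightarrow> nat) set" where
  "Psi f = gen_group ({sgen (2*i - 1) | i. 1 \<le> i \<and> i \<le> f} \<union>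
                      {stilde i | i. 1 \<le> i \<and> i \<le> f - 1})"

end

theory Submission
  imports Defs
begin

text \<open>Every element of \<open>\<Psi>\<close> permutes the rows \<open>{2k-1, 2k}\<close> of the first component of
  \<open>t\<^sup>\<nu>\<^sub>f\<close>, possibly swapping the two entries of a row; that is, it commutes with the involution
  \<open>row_mate\<close> exchanging \<open>2k-1\<close> and \<open>2k\<close>. Since \<open>d \<in> D\<^sub>f\<close> increases along rows and down the
  first column, an inversion \<open>(i, j)\<close> of \<open>d\<close> always has \<open>i = 2k\<close> even and
  \<open>d (i - 1) < d j < d i\<close>. With \<open>u = w\<inverse>\<close>, such an inversion is sent to the inversion
  \<open>(u i, u j)\<close> of \<open>w d\<close> if \<open>u i < u j\<close>, and otherwise to \<open>(u j, u (i - 1))\<close>, where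
  \<open>u (i - 1)\<close> is the row mate of \<open>u i\<close>. This map is injective, so \<open>\<ell>(d) \<le> \<ell>(w d)\<close>.\<close>

lemma transpose_comp_involution:
  assumes "\<And>x. r (r x) = x"
  shows "transpose a b \<circ> r = r \<circ> transpose (r a) (r b)"
proof -
  have "r \<circ> r = id"
    using assms by (simp add: fun_eq_iff)
  then have "bij r" and "inv r = r"
    by (auto intro: o_bij inv_unique_comp)
  then show ?thesis
    using transpose_comp_eq[of r a b] by simp
qed

lemma gen_group_subset:
  assumes "id \<in> G" and "\<And>g h. g \<in> G \<Longrightarrow> h \<in> G \<Longrightarrow> rmult g h \<in> G"
    and "\<And>g. g \<in> G \<Longrightarrow> inv g \<in> G" and "S \<subseteq> G"
  shows "gen_group S \<subseteq> G"
proof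
  fix g assume "g \<in> gen_group S"
  then show "g \<in> G"
    by (induction rule: gen_group.induct) (use assms in blast)+
qed

lemma bij_inv_comp_commute:
  assumes "bij g" and "g \<circ> r = r \<circ> g"
  shows "inv g \<circ> r = r \<circ> inv g"
proof
  fix x
  have "g (r (inv g x)) = r x"
    using fun_cong[OF assms(2), of "inv g x"] surj_f_inv_f[OF bij_is_surj[OF assms(1)]] by simp
  then show "(inv g \<circ> r) x = (r \<circ> inv g) x"
    using inv_f_f[OF bij_is_inj[OF assms(1)]] by (metis comp_apply)
qed

definition row_mate :: "nat \<Rightarrow> nat" where
  "row_mate a = (if odd a then a + 1 else a - 1)"

lemma row_mate_row_mate [simp]: "row_mate (row_mate a) = a"
  by (simp add: row_mate_def)

lemma row_mate_odd: "odd a \<Longrightarrow> row_mate a = a + 1"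
  and row_mate_even: "even a \<Longrightarrow> row_mate a = a - 1"
  by (simp_all add: row_mate_def)

lemma sgen_odd_row_mate:
  assumes "odd j"
  shows "sgen j \<circ> row_mate = row_mate \<circ> sgen j"
  using transpose_comp_involution[of row_mate j "j + 1"] assms
  by (simp add: sgen_def row_mate_odd row_mate_even transpose_commute)

lemma stilde_eq_transpose:
  assumes "1 \<le> i"
  shows "stilde i = transpose (2*i - 1) (2*i + 1) \<circ> transpose (2*i) (2*i + 2)"
  using assms by (auto simp: fun_eq_iff stilde_def rmult_def sgen_def transpose_def)

lemma stilde_row_mate:
  assumes "1 \<le> i"
  shows "stilde i \<circ> row_mate = row_mate \<circ> stilde i"
proof -
  let ?a = "transpose (2*i - 1) (2*i + 1)" and ?b = "transpose (2*i) (2*i + 2)"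
  have "odd (2*i - 1)"
    using assms by simp
  then have ab: "?a \<circ> row_mate = row_mate \<circ> ?b" and ba: "?b \<circ> row_mate = row_mate \<circ> ?a"
    using transpose_comp_involution[of row_mate] assms by (simp_all add: row_mate_odd row_mate_even)
  have "stilde i \<circ> row_mate = ?a \<circ> (?b \<circ> row_mate)"
    by (simp only: stilde_eq_transpose[OF assms] comp_assoc)
  also have "\<dots> = (?a \<circ> row_mate) \<circ> ?a"
    by (simp only: ba comp_assoc)
  also have "\<dots> = row_mate \<circ> (?b \<circ> ?a)"
    by (simp only: ab comp_assoc)
  also have "?b \<circ> ?a = ?a \<circ> ?b"
    using assms by (intro swap_id_independent) auto
  finally show ?thesis
    by (simp only: stilde_eq_transpose[OF assms])
qed

lemma Psi_row_mate:
  assumes "w \<in> Psi f"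
  shows "w permutes {1..2*f}" and "w \<circ> row_mate = row_mate \<circ> w"
proof -
  let ?G = "{w. w permutes {1..2*f} \<and> w \<circ> row_mate = row_mate \<circ> w}"
  have "sgen (2*i - 1) \<in> ?G" if "1 \<le> i" "i \<le> f" for i
    using that sgen_odd_row_mate[of "2*i - 1"] unfolding sgen_def
    by (auto intro!: permutes_swap_id)
  moreover have "stilde i \<in> ?G" if "1 \<le> i" "i \<le> f - 1" for i
    using that stilde_row_mate[of i] unfolding stilde_def rmult_def sgen_def
    by (auto intro!: permutes_compose permutes_swap_id)
  moreover have "rmult g h \<in> ?G" if "g \<in> ?G" "h \<in> ?G" for g h
  proof -
    have "(h \<circ> g) \<circ> row_mate = row_mate \<circ> (h \<circ> g)"
      using that by (simp add: fun_eq_iff)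
    then show ?thesis
      using that by (simp add: rmult_def permutes_compose)
  qed
  moreover have "inv g \<in> ?G" if "g \<in> ?G" for g
    using that by (auto intro: permutes_inv bij_inv_comp_commute permutes_bij)
  ultimately have "Psi f \<subseteq> ?G"
    unfolding Psi_def by (intro gen_group_subset) (auto intro: permutes_id)
  then show "w permutes {1..2*f}" and "w \<circ> row_mate = row_mate \<circ> w"
    using assms by auto
qed

definition inversions :: "nat \<Rightarrow> (nat \<Rightarrow> nat) \<Rightarrow> (nat \<times> nat) set" where
  "inversions n \<sigma> = {(i, j). 1 \<le> i \<and> i < j \<and> j \<le> n \<and> \<sigma> i > \<sigma> j}"

lemma len_eq_card_inversions: "len n \<sigma> = card (inversions n \<sigma>)"
  by (simp add: len_def inversions_def)

lemma finite_inversions: "finite (inversions n \<sigma>)"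
  by (rule finite_subset[of _ "{..n} \<times> {..n}"]) (auto simp: inversions_def)

lemma len_le_len_rmult_row_mate:
  assumes w: "w permutes {1..n}" "w \<circ> row_mate = row_mate \<circ> w"
    and inv_d: "\<And>i j. (i, j) \<in> inversions n d \<Longrightarrow> even i \<and> d (i - 1) < d j"
  shows "len n d \<le> len n (rmult w d)"
proof -
  define u where "u = inv w"
  have u: "u permutes {1..n}" "u \<circ> row_mate = row_mate \<circ> u"
    using w by (simp_all add: u_def permutes_inv bij_inv_comp_commute permutes_bij)
  have w_u: "w (u x) = x" for x
    using permutes_inverses(1)[OF w(1)] by (simp add: u_def)
  have u_eq_iff: "u x = u y \<longleftrightarrow> x = y" for x y
    using permutes_inj[OF u(1)] by (simp add: inj_eq)
  have u_in: "u x \<in> {1..n}" if "x \<in> {1..n}" for x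
    using permutes_in_image[OF u(1)] that by blast
  define g where "g = (\<lambda>(i, j). if u i < u j then (u i, u j) else (u j, u (i - 1)))"
  have g_into: "g (i, j) \<in> inversions n (rmult w d)" if ij: "(i, j) \<in> inversions n d" for i j
  proof -
    have i: "1 \<le> i" "i < j" "j \<le> n" "d j < d i" and "even i" "d (i - 1) < d j"
      using ij inv_d[OF ij] by (auto simp: inversions_def)
    then have mate: "u (i - 1) = row_mate (u i)"
      using fun_cong[OF u(2), of i] by (simp add: row_mate_even)
    have "i \<in> {1..n}" "j \<in> {1..n}" "i - 1 \<in> {1..n}"
      using i \<open>even i\<close> by (auto elim!: evenE)
    then have "u i \<in> {1..n}" "u j \<in> {1..n}" "u (i - 1) \<in> {1..n}"
      using u_in by blast+
    moreover have "u j < u (i - 1)" if "\<not> u i < u j"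
    proof -
      have "u j \<noteq> u i" "u j \<noteq> u (i - 1)"
        using i by (auto simp: u_eq_iff)
      then show ?thesis
        using that mate by (auto simp: row_mate_def)
    qed
    ultimately show ?thesis
      using i \<open>d (i - 1) < d j\<close> by (auto simp: g_def inversions_def rmult_def w_u)
  qed
  have "inj_on g (inversions n d)"
  proof (rule inj_onI, clarify)
    fix i j i' j'
    assume ij: "(i, j) \<in> inversions n d" and ij': "(i', j') \<in> inversions n d"
      and eq: "g (i, j) = g (i', j')"
    have "i < j" "i' < j'" "1 \<le> i" "1 \<le> i'"
      using ij ij' by (auto simp: inversions_def)
    consider "u i < u j" "u i' < u j'" | "\<not> u i < u j" "\<not> u i' < u j'"
      | "u i < u j" "\<not> u i' < u j'" | "\<not> u i < u j" "u i' < u j'"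
      by blast
    \<comment> \<open>in the mixed cases \<open>i = j'\<close> and \<open>j = i' - 1\<close> would give \<open>i < j < i' < j' = i\<close>\<close>
    then show "i = i' \<and> j = j'"
      using eq \<open>i < j\<close> \<open>i' < j'\<close> \<open>1 \<le> i\<close> \<open>1 \<le> i'\<close>
      by cases (auto simp: g_def u_eq_iff)
  qed
  then have "card (inversions n d) \<le> card (inversions n (rmult w d))"
    using g_into by (intro card_inj_on_le finite_inversions) auto
  then show ?thesis
    by (simp add: len_eq_card_inversions)
qed

lemma odd_entry_less_later:
  fixes d :: "nat \<Rightarrow> 'a::order" and f a b :: nat
  assumes rows: "\<forall>k\<in>{1..f}. d (2*k - 1) < d (2*k)"
    and column: "\<forall>k\<in>{1..<f}. d (2*k - 1) < d (2*k + 1)"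
    and "odd a" "a < b" "b \<le> 2*f"
  shows "d a < d b"
  using assms(4,5)
proof (induction b rule: less_induct)
  case (less b)
  \<comment> \<open>the entry \<open>p\<close> to the left of \<open>b\<close> in its row, or above it in the first column\<close>
  define p where "p = (if even b then b - 1 else b - 2)"
  have "d p < d b" "a \<le> p" "p < b"
  proof -
    show "a \<le> p" "p < b"
      using \<open>odd a\<close> less.prems unfolding p_def by presburger+
    show "d p < d b"
    proof (cases "even b")
      case True
      then obtain k where "b = 2*k" "k \<in> {1..f}"
        using less.prems \<open>odd a\<close> by (auto elim!: evenE)
      then show ?thesis using rows by (auto simp: p_def)
    next
      case False
      then obtain k where "b = 2*k + 1" "k \<in> {1..<f}"
        using less.prems \<open>odd a\<close> by (auto elim!: oddE)
      then show ?thesis using column by (auto simp: p_def)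
    qed
  qed
  then show ?case
    using less.IH[of p] less.prems by (cases "p = a") auto
qed

lemma D_f_inversion:
  assumes "d \<in> D_f n f" and ij: "(i, j) \<in> inversions n d"
  shows "even i \<and> d (i - 1) < d j"
proof -
  have d: "d permutes {1..2*f}"
    and rows: "\<forall>k\<in>{1..f}. d (2*k - 1) < d (2*k)"
    and column: "\<forall>k\<in>{1..<f}. d (2*k - 1) < d (2*k + 1)"
    using assms(1) by (auto simp: D_f_def D_nu_def Sym_def)
  have i: "1 \<le> i" "i < j" "d j < d i"
    using ij by (auto simp: inversions_def)
  have "j \<le> 2*f"
  proof (rule ccontr)
    assume j: "\<not> j \<le> 2*f"
    then have "d j = j"
      using permutes_not_in[OF d] by simp
    moreover have "d i \<le> max i (2*f)"
      using permutes_in_image[OF d, of i] permutes_not_in[OF d, of i] by (cases "i \<le> 2*f") auto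
    ultimately show False
      using i j by simp
  qed
  have "even i"
    using odd_entry_less_later[OF rows column _ \<open>i < j\<close> \<open>j \<le> 2*f\<close>] i by auto
  moreover have "d (i - 1) < d j"
    using odd_entry_less_later[OF rows column _ _ \<open>j \<le> 2*f\<close>, of "i - 1"] \<open>even i\<close> i
    by (auto elim!: evenE)
  ultimately show ?thesis ..
qed

theorem lemma5p7:
  fixes n f :: nat and d w :: "nat \<Rightarrow> nat"
  assumes "1 \<le> f" and "f \<le> n div 2"
    and "d \<in> D_f n f" and "w \<in> Psi f"
  shows "len n (rmult w d) \<ge> len n d"
proof -
  have "{1..2*f} \<subseteq> {1..n}"
    using assms(2) by auto
  with Psi_row_mate(1)[OF assms(4)] have "w permutes {1..n}"
    by (rule permutes_subset)
  then show ?thesis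
    using len_le_len_rmult_row_mate Psi_row_mate(2)[OF assms(4)] D_f_inversion[OF assms(3)]
    by blast
qed

end
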